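(* Let $M=(a_{ij})$ be a matrix game with entries in $[0,1]$ and value $v$, and let $\epsilon,c\ge0$. Let $M(t)$ be a corresponding repeated game with error $c\epsilon$ in which both players are $\epsilon$-Hannan consistent (with respect to the observed payoffs). Then almost surely \[v-(c+1)\epsilon\le\liminf_{t\to\infty}g(t)\le\limsup_{t\to\infty}g(t)\le v+(c+1)\epsilon,\] \[v-2(c+1)\epsilon\le\liminf_{t\to\infty}u(\hat\sigma_1(t),br)\le\limsup_{t\to\infty}u(br,\hat\sigma_2(t))\le v+2(c+1)\epsilon.\]
   Context: Repeated game with error $e$: at rounds $t=1,2,\dots$ player 1 chooses a row $i(t)$ and player 2 a column $j(t)$, and they observe a random payoff $a_{i(t)j(t)}(t)\in[0,1]$ whose distribution may depend on all previous action choices; it is required that almost surely there is $t_0$ with $|a_{ij}(t)-a_{ij}|<e$ for all $i,j$ and all $t\ge t_0$. Player 1 receives reward $a_{i(t)j(t)}(t)$ and player 2 the reward $1-a_{i(t)j(t)}(t)$. A player is $\epsilon$-Hannan consistent if its average external regret $r(t)=\frac1t(\max_k\sum_{s\le t}x_k(s)-\sum_{s\le t}x_{k(s)}(s))$ with respect to its observed rewards (where $x_k(s)$ is the reward it would have observed at round $s$ by playing $k$) satisfies $\limsup_t r(t)\le\epsilon$ a.s. Here $g(t)=\frac1t\sum_{s=1}^t a_{i(s)j(s)}(s)$; empirical frequencies $\hat\sigma_1(t)(i)=t_i/t$, $\hat\sigma_2(t)(j)=t_j/t$ with $t_i$ ($t_j$) the number of rounds $s\le t$ with $i(s)=i$ ($j(s)=j$).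 Utilities refer to the exact matrix: $u(\sigma_1,\sigma_2)=\sigma_1M\sigma_2$, $u(br,\sigma_2)=\max_{\sigma_1'}\sigma_1'M\sigma_2$, $u(\sigma_1,br)=\min_{\sigma_2'}\sigma_1M\sigma_2'$. *)

theory Defs
  imports "HOL-Probability.Probability"
begin

definition mixed :: "('a::finite \<Rightarrow> real) set" where
  "mixed = {\<sigma>. (\<forall>x. 0 \<le> \<sigma> x) \<and> (\<Sum>x\<in>UNIV. \<sigma> x) = 1}"

definition util :: "('r::finite \<Rightarrow> 'c::finite \<Rightarrow> real) \<Rightarrow> ('r \<Rightarrow> real) \<Rightarrow> ('c \<Rightarrow> real) \<Rightarrow> real" where
  "util M \<sigma>1 \<sigma>2 = (\<Sum>i\<in>UNIV. \<Sum>j\<in>UNIV. \<sigma>1 i * M i j * \<sigma>2 j)"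

definition util_br1 :: "('r::finite \<Rightarrow> 'c::finite \<Rightarrow> real) \<Rightarrow> ('c \<Rightarrow> real) \<Rightarrow> real" where
  "util_br1 M \<sigma>2 = (SUP \<sigma>1\<in>mixed. util M \<sigma>1 \<sigma>2)"

definition util_br2 :: "('r::finite \<Rightarrow> 'c::finite \<Rightarrow> real) \<Rightarrow> ('r \<Rightarrow> real) \<Rightarrow> real" where
  "util_br2 M \<sigma>1 = (INF \<sigma>2\<in>mixed. util M \<sigma>1 \<sigma>2)"

text \<open>The value of the matrix game (max-min value; equals the min-max value by von Neumann).\<close>
definition game_value :: "('r::finite \<Rightarrow> 'c::finite \<Rightarrow> real) \<Rightarrow> real" where
  "game_value M = (SUP \<sigma>1\<in>mixed. util_br2 M \<sigma>1)"

text \<open>Along one realisation: a s i j is the payoff matrix at round s, ii s / jj s the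
  actions chosen at round s (rounds are s = 1, 2, ...).\<close>

definition avg_payoff :: "(nat \<Rightarrow> 'r \<Rightarrow> 'c \<Rightarrow> real) \<Rightarrow> (nat \<Rightarrow> 'r) \<Rightarrow> (nat \<Rightarrow> 'c) \<Rightarrow> nat \<Rightarrow> real" where
  "avg_payoff a ii jj t = (\<Sum>s=1..t. a s (ii s) (jj s)) / real t"

definition emp_freq :: "(nat \<Rightarrow> 'a) \<Rightarrow> nat \<Rightarrow> 'a \<Rightarrow> real" where
  "emp_freq ii t x = real (card {s\<in>{1..t}. ii s = x}) / real t"

definition regret1 :: "(nat \<Rightarrow> 'r::finite \<Rightarrow> 'c \<Rightarrow> real) \<Rightarrow> (nat \<Rightarrow> 'r) \<Rightarrow> (nat \<Rightarrow> 'c) \<Rightarrow> nat \<Rightarrow> real" where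
  "regret1 a ii jj t =
     (Max (range (\<lambda>k. \<Sum>s=1..t. a s k (jj s))) - (\<Sum>s=1..t. a s (ii s) (jj s))) / real t"

definition regret2 :: "(nat \<Rightarrow> 'r \<Rightarrow> 'c::finite \<Rightarrow> real) \<Rightarrow> (nat \<Rightarrow> 'r) \<Rightarrow> (nat \<Rightarrow> 'c) \<Rightarrow> nat \<Rightarrow> real" where
  "regret2 a ii jj t =
     (Max (range (\<lambda>l. \<Sum>s=1..t. 1 - a s (ii s) l)) - (\<Sum>s=1..t. 1 - a s (ii s) (jj s))) / real t"

end

theory Submission
  imports Defs
begin

text \<open>The argument is pathwise: fix a realisation on which the payoffs are within \<open>c\<epsilon>\<close> of
  \<open>M\<close> from round \<open>K\<close> on and both regrets have limsup at most \<open>\<epsilon>\<close>.  Player 1's regret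
  against a pure best reply \<open>k\<close> to player 2's empirical frequencies gives
  \<open>u(br, \<sigma>\<^sub>2(t)) \<le> g(t) + r\<^sub>1(t) + c\<epsilon> + K/t\<close>, the first \<open>K\<close> rounds costing at most \<open>K\<close>
  in total; symmetrically \<open>g(t) \<le> u(\<sigma>\<^sub>1(t), br) + r\<^sub>2(t) + c\<epsilon> + K/t\<close>.  Together with
  \<open>u(\<sigma>\<^sub>1, br) \<le> v \<le> u(br, \<sigma>\<^sub>2)\<close> for all mixed strategies, chaining these inequalities and
  passing to limsup/liminf gives all six bounds.  No minimax theorem is needed, and the
  probability space only enters through "almost surely".\<close>

lemma indicator_mixed: "(\<lambda>x. if x = k then 1 else 0 :: real) \<in> mixed"
  unfolding mixed_def by simp

lemma mixed_nonempty: "mixed \<noteq> {}"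
  using indicator_mixed by blast

lemma mixed_sum_le:
  fixes \<sigma> :: "'a::finite \<Rightarrow> real"
  assumes "\<sigma> \<in> mixed" and "\<And>x. h x \<le> B"
  shows "(\<Sum>x\<in>UNIV. \<sigma> x * h x) \<le> B"
proof -
  have "(\<Sum>x\<in>UNIV. \<sigma> x * h x) \<le> (\<Sum>x\<in>UNIV. \<sigma> x * B)"
    using assms by (intro sum_mono mult_left_mono) (auto simp: mixed_def)
  also have "\<dots> = B"
    using assms(1) by (simp add: mixed_def sum_distrib_right[symmetric])
  finally show ?thesis .
qed

lemma mixed_sum_ge:
  fixes \<sigma> :: "'a::finite \<Rightarrow> real"
  assumes "\<sigma> \<in> mixed" and "\<And>x. B \<le> h x"
  shows "B \<le> (\<Sum>x\<in>UNIV. \<sigma> x * h x)"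
  using mixed_sum_le[OF assms(1), of "\<lambda>x. - h x" "- B"] assms(2)
  by (simp add: sum_negf)

lemma util_eq_sum_rows: "util M \<sigma>1 \<sigma>2 = (\<Sum>i\<in>UNIV. \<sigma>1 i * (\<Sum>j\<in>UNIV. M i j * \<sigma>2 j))"
  unfolding util_def by (simp add: sum_distrib_left mult.assoc)

lemma util_eq_sum_cols: "util M \<sigma>1 \<sigma>2 = (\<Sum>j\<in>UNIV. \<sigma>2 j * (\<Sum>i\<in>UNIV. \<sigma>1 i * M i j))"
  unfolding util_def
  by (subst sum.swap) (simp add: sum_distrib_left mult.commute mult.left_commute)

lemma util_le_Max_row:
  assumes "\<sigma>1 \<in> mixed"
  shows "util M \<sigma>1 \<sigma>2 \<le> Max (range (\<lambda>k. \<Sum>j\<in>UNIV. M k j * \<sigma>2 j))"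
  unfolding util_eq_sum_rows by (rule mixed_sum_le[OF assms]) simp

lemma Min_col_le_util:
  assumes "\<sigma>2 \<in> mixed"
  shows "Min (range (\<lambda>l. \<Sum>i\<in>UNIV. \<sigma>1 i * M i l)) \<le> util M \<sigma>1 \<sigma>2"
  unfolding util_eq_sum_cols by (rule mixed_sum_ge[OF assms]) simp

lemma util_le_util_br1:
  assumes "\<sigma>1 \<in> mixed"
  shows "util M \<sigma>1 \<sigma>2 \<le> util_br1 M \<sigma>2"
  unfolding util_br1_def
  by (rule cSUP_upper[OF assms bdd_aboveI2[OF util_le_Max_row]])

lemma util_br2_le_util:
  assumes "\<sigma>2 \<in> mixed"
  shows "util_br2 M \<sigma>1 \<le> util M \<sigma>1 \<sigma>2"
  unfolding util_br2_def
  by (rule cINF_lower[OF bdd_belowI2[OF Min_col_le_util] assms])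

lemma util_br1_le_row: "\<exists>k. util_br1 M \<sigma>2 \<le> (\<Sum>j\<in>UNIV. M k j * \<sigma>2 j)"
proof -
  let ?row = "\<lambda>k. \<Sum>j\<in>UNIV. M k j * \<sigma>2 j"
  have "Max (range ?row) \<in> range ?row"
    by (rule Max_in) simp_all
  then obtain k where k: "Max (range ?row) = ?row k"
    by blast
  have "util_br1 M \<sigma>2 \<le> ?row k"
    unfolding util_br1_def k[symmetric] by (rule cSUP_least[OF mixed_nonempty util_le_Max_row])
  then show ?thesis ..
qed

lemma col_le_util_br2: "\<exists>l. (\<Sum>i\<in>UNIV. \<sigma>1 i * M i l) \<le> util_br2 M \<sigma>1"
proof -
  let ?col = "\<lambda>l. \<Sum>i\<in>UNIV. \<sigma>1 i * M i l"
  have "Min (range ?col) \<in> range ?col"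
    by (rule Min_in) simp_all
  then obtain l where l: "Min (range ?col) = ?col l"
    by blast
  have "?col l \<le> util_br2 M \<sigma>1"
    unfolding util_br2_def l[symmetric] by (rule cINF_greatest[OF mixed_nonempty Min_col_le_util])
  then show ?thesis ..
qed

lemma util_br2_le_game_value:
  fixes M :: "'r::finite \<Rightarrow> 'c::finite \<Rightarrow> real"
  assumes "\<sigma>1 \<in> mixed"
  shows "util_br2 M \<sigma>1 \<le> game_value M"
proof -
  obtain \<sigma>2 :: "'c::finite \<Rightarrow> real" where \<sigma>2: "\<sigma>2 \<in> mixed"
    using mixed_nonempty by blast
  have "util_br2 M \<sigma> \<le> util_br1 M \<sigma>2" if "\<sigma> \<in> mixed" for \<sigma>
    using util_br2_le_util[OF \<sigma>2] util_le_util_br1[OF that] order_trans by blast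
  then show ?thesis
    unfolding game_value_def by (intro cSUP_upper assms bdd_aboveI2)
qed

lemma game_value_le_util_br1:
  assumes "\<sigma>2 \<in> mixed"
  shows "game_value M \<le> util_br1 M \<sigma>2"
  unfolding game_value_def
  using util_br2_le_util[OF assms] util_le_util_br1 order_trans
  by (intro cSUP_least mixed_nonempty) blast

lemma sum_card_fibres:
  fixes w :: "'a::finite \<Rightarrow> real"
  assumes "finite S"
  shows "(\<Sum>x\<in>UNIV. w x * real (card {s\<in>S. f s = x})) = (\<Sum>s\<in>S. w (f s))"
proof -
  have "(\<Sum>s\<in>S. w (f s)) = (\<Sum>s\<in>S. \<Sum>x\<in>UNIV. if f s = x then w x else 0)"
    by simp
  also have "\<dots> = (\<Sum>x\<in>UNIV. \<Sum>s\<in>S. if f s = x then w x else 0)"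
    by (rule sum.swap)
  also have "\<dots> = (\<Sum>x\<in>UNIV. w x * real (card {s\<in>S. f s = x}))"
    using assms by (simp add: sum.If_cases Int_def mult.commute)
  finally show ?thesis by simp
qed

lemma sum_emp_freq:
  fixes ii :: "nat \<Rightarrow> 'a::finite"
  shows "real t * (\<Sum>x\<in>UNIV. w x * emp_freq ii t x) = (\<Sum>s=1..t. w (ii s))"
  using sum_card_fibres[of "{1..t}" w ii]
  by (cases "t = 0") (simp_all add: emp_freq_def sum_divide_distrib[symmetric])

lemma emp_freq_mixed:
  assumes "t \<ge> 1"
  shows "emp_freq ii t \<in> mixed"
  using sum_emp_freq[of t "\<lambda>_. 1" ii] assms
  by (auto simp: mixed_def emp_freq_def)

lemma avg_payoff_mult: "real t * avg_payoff a ii jj t = (\<Sum>s=1..t. a s (ii s) (jj s))"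
  by (cases "t = 0") (simp_all add: avg_payoff_def)

lemma regret1_ge:
  fixes a :: "nat \<Rightarrow> 'r::finite \<Rightarrow> 'c \<Rightarrow> real"
  shows "(\<Sum>s=1..t. a s k (jj s)) - (\<Sum>s=1..t. a s (ii s) (jj s)) \<le> real t * regret1 a ii jj t"
proof (cases "t = 0")
  case False
  have "(\<Sum>s=1..t. a s k (jj s)) \<le> Max (range (\<lambda>k. \<Sum>s=1..t. a s k (jj s)))"
    by (rule Max_ge) auto
  with False show ?thesis by (simp add: regret1_def)
qed simp

lemma regret2_ge:
  fixes a :: "nat \<Rightarrow> 'r \<Rightarrow> 'c::finite \<Rightarrow> real"
  shows "(\<Sum>s=1..t. a s (ii s) (jj s)) - (\<Sum>s=1..t. a s (ii s) l) \<le> real t * regret2 a ii jj t"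
proof (cases "t = 0")
  case False
  have "(\<Sum>s=1..t. 1 - a s (ii s) l) \<le> Max (range (\<lambda>l. \<Sum>s=1..t. 1 - a s (ii s) l))"
    by (rule Max_ge) auto
  moreover have "(\<Sum>s=1..t. 1 - a s (ii s) l) = real t - (\<Sum>s=1..t. a s (ii s) l)"
    and "(\<Sum>s=1..t. 1 - a s (ii s) (jj s)) = real t - (\<Sum>s=1..t. a s (ii s) (jj s))"
    by (simp_all add: sum_subtractf)
  moreover have "real t * regret2 a ii jj t
      = Max (range (\<lambda>l. \<Sum>s=1..t. 1 - a s (ii s) l)) - (\<Sum>s=1..t. 1 - a s (ii s) (jj s))"
    using False by (simp add: regret2_def)
  ultimately show ?thesis by linarith
qed simp

lemma sum_le_eventually_small:
  fixes f :: "nat \<Rightarrow> real"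
  assumes "\<And>s. f s \<le> 1" and "\<And>s. K \<le> s \<Longrightarrow> f s \<le> \<delta>" and "0 \<le> \<delta>"
  shows "(\<Sum>s=1..t. f s) \<le> real t * \<delta> + real K"
proof -
  have "(\<Sum>s=1..t. f s) \<le> (\<Sum>s=1..t. \<delta> + of_bool (s < K))"
  proof (rule sum_mono)
    fix s
    show "f s \<le> \<delta> + of_bool (s < K)"
      using assms(1)[of s] assms(2)[of s] assms(3) by (cases "s < K") auto
  qed
  also have "\<dots> = real t * \<delta> + real (card ({1..t} \<inter> {s. s < K}))"
    by (simp add: sum.distrib sum_of_bool_eq)
  also have "card ({1..t} \<inter> {s. s < K}) \<le> card {..<K}"
    by (intro card_mono) auto
  finally show ?thesis by simp
qed

lemma util_br1_emp_freq_le: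
  fixes M :: "'r::finite \<Rightarrow> 'c::finite \<Rightarrow> real" and a :: "nat \<Rightarrow> 'r \<Rightarrow> 'c \<Rightarrow> real"
  assumes M_le: "\<And>i j. M i j \<le> 1" and a_ge: "\<And>s i j. 0 \<le> a s i j" and "0 \<le> \<delta>"
    and close: "\<And>s i j. K \<le> s \<Longrightarrow> \<bar>a s i j - M i j\<bar> \<le> \<delta>" and "1 \<le> t"
  shows "util_br1 M (emp_freq jj t)
           \<le> avg_payoff a ii jj t + regret1 a ii jj t + \<delta> + real K / real t"
proof -
  obtain k where k: "util_br1 M (emp_freq jj t) \<le> (\<Sum>j\<in>UNIV. M k j * emp_freq jj t j)"
    using util_br1_le_row by blast
  have "(\<Sum>s=1..t. M k (jj s) - a s k (jj s)) \<le> real t * \<delta> + real K"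
  proof (rule sum_le_eventually_small)
    show "M k (jj s) - a s k (jj s) \<le> 1" for s
      using M_le[of k "jj s"] a_ge[of s k "jj s"] by linarith
    show "M k (jj s) - a s k (jj s) \<le> \<delta>" if "K \<le> s" for s
      using close[of s k "jj s", OF that] by linarith
  qed fact
  then have err: "(\<Sum>s=1..t. M k (jj s)) \<le> (\<Sum>s=1..t. a s k (jj s)) + real t * \<delta> + real K"
    by (simp add: sum_subtractf)
  have "real t * util_br1 M (emp_freq jj t) \<le> real t * (\<Sum>j\<in>UNIV. M k j * emp_freq jj t j)"
    using k by (simp add: mult_left_mono)
  also have "\<dots> = (\<Sum>s=1..t. M k (jj s))"
    by (rule sum_emp_freq)
  also have "\<dots> \<le> real t * avg_payoff a ii jj t + real t * regret1 a ii jj t + real t * \<delta> + real K"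
    using err regret1_ge[of a k jj t ii] avg_payoff_mult[of t a ii jj] by linarith
  finally show ?thesis
    using \<open>1 \<le> t\<close> by (simp add: field_simps)
qed

lemma avg_payoff_le_util_br2:
  fixes M :: "'r::finite \<Rightarrow> 'c::finite \<Rightarrow> real" and a :: "nat \<Rightarrow> 'r \<Rightarrow> 'c \<Rightarrow> real"
  assumes M_ge: "\<And>i j. 0 \<le> M i j" and a_le: "\<And>s i j. a s i j \<le> 1" and "0 \<le> \<delta>"
    and close: "\<And>s i j. K \<le> s \<Longrightarrow> \<bar>a s i j - M i j\<bar> \<le> \<delta>" and "1 \<le> t"
  shows "avg_payoff a ii jj t
           \<le> util_br2 M (emp_freq ii t) + regret2 a ii jj t + \<delta> + real K / real t"
proof -
  obtain l where l: "(\<Sum>i\<in>UNIV. emp_freq ii t i * M i l) \<le> util_br2 M (emp_freq ii t)"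
    using col_le_util_br2 by blast
  have "(\<Sum>s=1..t. a s (ii s) l - M (ii s) l) \<le> real t * \<delta> + real K"
  proof (rule sum_le_eventually_small)
    show "a s (ii s) l - M (ii s) l \<le> 1" for s
      using M_ge[of "ii s" l] a_le[of s "ii s" l] by linarith
    show "a s (ii s) l - M (ii s) l \<le> \<delta>" if "K \<le> s" for s
      using close[of s "ii s" l, OF that] by linarith
  qed fact
  then have err: "(\<Sum>s=1..t. a s (ii s) l) \<le> (\<Sum>s=1..t. M (ii s) l) + real t * \<delta> + real K"
    by (simp add: sum_subtractf)
  have "real t * avg_payoff a ii jj t \<le> real t * regret2 a ii jj t + (\<Sum>s=1..t. a s (ii s) l)"
    using regret2_ge[of a ii jj t l] avg_payoff_mult[of t a ii jj] by linarith
  also have "\<dots> \<le> real t * regret2 a ii jj t + (\<Sum>s=1..t. M (ii s) l) + real t * \<delta> + real K"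
    using err by linarith
  also have "(\<Sum>s=1..t. M (ii s) l) = real t * (\<Sum>i\<in>UNIV. M i l * emp_freq ii t i)"
    by (rule sum_emp_freq[symmetric])
  also have "\<dots> = real t * (\<Sum>i\<in>UNIV. emp_freq ii t i * M i l)"
    by (simp add: mult.commute)
  also have "\<dots> \<le> real t * util_br2 M (emp_freq ii t)"
    using l by (simp add: mult_left_mono)
  finally show ?thesis
    using \<open>1 \<le> t\<close> by (simp add: field_simps)
qed

lemma limsup_le_of_eventually_le:
  fixes x y :: "nat \<Rightarrow> real"
  assumes "limsup (\<lambda>t. ereal (x t)) \<le> ereal e"
    and "eventually (\<lambda>t. y t \<le> C + x t) sequentially"
  shows "limsup (\<lambda>t. ereal (y t)) \<le> ereal (C + e)"
proof -
  have "limsup (\<lambda>t. ereal (y t)) \<le> limsup (\<lambda>t. ereal C + ereal (x t))"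
    by (rule Limsup_mono) (use assms(2) in eventually_elim, simp)
  also have "\<dots> = ereal C + limsup (\<lambda>t. ereal (x t))"
    by (rule Limsup_add_ereal_left) simp_all
  also have "\<dots> \<le> ereal C + ereal e"
    using assms(1) by (rule add_left_mono)
  finally show ?thesis by simp
qed

lemma liminf_ge_of_eventually_ge:
  fixes x y :: "nat \<Rightarrow> real"
  assumes "limsup (\<lambda>t. ereal (x t)) \<le> ereal e"
    and "eventually (\<lambda>t. C - x t \<le> y t) sequentially"
  shows "ereal (C - e) \<le> liminf (\<lambda>t. ereal (y t))"
proof -
  have "limsup (\<lambda>t. ereal (- y t)) \<le> ereal (- C + e)"
    by (rule limsup_le_of_eventually_le[OF assms(1)]) (use assms(2) in eventually_elim, simp)
  then have "- ereal (- C + e) \<le> - limsup (\<lambda>t. ereal (- y t))"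
    by (rule ereal_minus_le_minus[THEN iffD2])
  also have "- limsup (\<lambda>t. ereal (- y t)) = liminf (\<lambda>t. ereal (y t))"
    using ereal_Limsup_uminus[of sequentially "\<lambda>t. ereal (y t)"] by simp
  finally show ?thesis by simp
qed

lemma limsup_add_le:
  fixes x y :: "nat \<Rightarrow> real"
  assumes "limsup (\<lambda>t. ereal (x t)) \<le> ereal d" and "limsup (\<lambda>t. ereal (y t)) \<le> ereal e"
  shows "limsup (\<lambda>t. ereal (x t + y t)) \<le> ereal (d + e)"
proof -
  have "limsup (\<lambda>t. ereal (x t + y t)) \<le> limsup (\<lambda>t. ereal (x t)) + limsup (\<lambda>t. ereal (y t))"
    unfolding plus_ereal.simps(1)[symmetric] by (rule ereal_limsup_add_mono)
  also have "\<dots> \<le> ereal d + ereal e"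
    by (rule add_mono[OF assms])
  finally show ?thesis by simp
qed

lemma limsup_add_null_le:
  fixes x y :: "nat \<Rightarrow> real"
  assumes "limsup (\<lambda>t. ereal (x t)) \<le> ereal e" and "y \<longlonglongrightarrow> 0"
  shows "limsup (\<lambda>t. ereal (x t + y t)) \<le> ereal e"
proof -
  have "limsup (\<lambda>t. ereal (y t)) = ereal 0"
    by (rule lim_imp_Limsup[OF trivial_limit_sequentially tendsto_ereal[OF assms(2)]])
  then show ?thesis
    using limsup_add_le[OF assms(1), of y 0] by simp
qed

lemma hannan_consistent_play_bounds:
  fixes M :: "'r::finite \<Rightarrow> 'c::finite \<Rightarrow> real" and a :: "nat \<Rightarrow> 'r \<Rightarrow> 'c \<Rightarrow> real"
    and ii :: "nat \<Rightarrow> 'r" and jj :: "nat \<Rightarrow> 'c"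
  assumes M_range: "\<And>i j. 0 \<le> M i j \<and> M i j \<le> 1"
    and a_range: "\<And>s i j. 0 \<le> a s i j \<and> a s i j \<le> 1"
    and "0 \<le> \<epsilon>" and "0 \<le> c"
    and close: "\<And>s i j. K \<le> s \<Longrightarrow> \<bar>a s i j - M i j\<bar> \<le> c * \<epsilon>"
    and hannan1: "limsup (\<lambda>t. ereal (regret1 a ii jj t)) \<le> ereal \<epsilon>"
    and hannan2: "limsup (\<lambda>t. ereal (regret2 a ii jj t)) \<le> ereal \<epsilon>"
  shows "let g = (\<lambda>t. ereal (avg_payoff a ii jj t));
           v = game_value M;
           lo = (\<lambda>t. ereal (util_br2 M (emp_freq ii t)));
           hi = (\<lambda>t. ereal (util_br1 M (emp_freq jj t)))
         in ereal (v - (c + 1) * \<epsilon>) \<le> liminf g \<and> liminf g \<le> limsup g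
            \<and> limsup g \<le> ereal (v + (c + 1) * \<epsilon>)
            \<and> ereal (v - 2 * (c + 1) * \<epsilon>) \<le> liminf lo \<and> liminf lo \<le> limsup hi
            \<and> limsup hi \<le> ereal (v + 2 * (c + 1) * \<epsilon>)"
proof -
  define v where "v = game_value M"
  define g where "g t = avg_payoff a ii jj t" for t
  define lo where "lo t = util_br2 M (emp_freq ii t)" for t
  define hi where "hi t = util_br1 M (emp_freq jj t)" for t
  define x1 where "x1 t = regret1 a ii jj t + real K / real t" for t
  define x2 where "x2 t = regret2 a ii jj t + real K / real t" for t
  have x1: "limsup (\<lambda>t. ereal (x1 t)) \<le> ereal \<epsilon>"
    unfolding x1_def by (rule limsup_add_null_le[OF hannan1 lim_const_over_n])
  have x2: "limsup (\<lambda>t. ereal (x2 t)) \<le> ereal \<epsilon>"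
    unfolding x2_def by (rule limsup_add_null_le[OF hannan2 lim_const_over_n])
  have x12: "limsup (\<lambda>t. ereal (x1 t + x2 t)) \<le> ereal (\<epsilon> + \<epsilon>)"
    by (rule limsup_add_le[OF x1 x2])
  have c\<epsilon>: "0 \<le> c * \<epsilon>"
    using \<open>0 \<le> c\<close> \<open>0 \<le> \<epsilon>\<close> by simp
  have bounds: "eventually (\<lambda>t. hi t \<le> g t + c * \<epsilon> + x1 t \<and> g t \<le> lo t + c * \<epsilon> + x2 t
                              \<and> lo t \<le> v \<and> v \<le> hi t) sequentially"
    using eventually_ge_at_top[of "1::nat"]
  proof eventually_elim
    case (elim t)
    have "hi t \<le> g t + c * \<epsilon> + x1 t"
      using util_br1_emp_freq_le[of M a "c * \<epsilon>" K t jj ii] M_range a_range c\<epsilon> close elim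
      by (simp add: hi_def g_def x1_def)
    moreover have "g t \<le> lo t + c * \<epsilon> + x2 t"
      using avg_payoff_le_util_br2[of M a "c * \<epsilon>" K t ii jj] M_range a_range c\<epsilon> close elim
      by (simp add: lo_def g_def x2_def)
    moreover have "lo t \<le> v"
      unfolding lo_def v_def by (rule util_br2_le_game_value[OF emp_freq_mixed[OF elim]])
    moreover have "v \<le> hi t"
      unfolding hi_def v_def by (rule game_value_le_util_br1[OF emp_freq_mixed[OF elim]])
    ultimately show ?case by blast
  qed
  have "ereal (v - c * \<epsilon> - \<epsilon>) \<le> liminf (\<lambda>t. ereal (g t))"
    by (rule liminf_ge_of_eventually_ge[OF x1]) (use bounds in eventually_elim, linarith)
  moreover have "limsup (\<lambda>t. ereal (g t)) \<le> ereal (v + c * \<epsilon> + \<epsilon>)"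
    by (rule limsup_le_of_eventually_le[OF x2]) (use bounds in eventually_elim, linarith)
  moreover have "ereal (v - 2 * c * \<epsilon> - (\<epsilon> + \<epsilon>)) \<le> liminf (\<lambda>t. ereal (lo t))"
    by (rule liminf_ge_of_eventually_ge[OF x12]) (use bounds in eventually_elim, linarith)
  moreover have "limsup (\<lambda>t. ereal (hi t)) \<le> ereal (v + 2 * c * \<epsilon> + (\<epsilon> + \<epsilon>))"
    by (rule limsup_le_of_eventually_le[OF x12]) (use bounds in eventually_elim, linarith)
  moreover have "liminf (\<lambda>t. ereal (lo t)) \<le> liminf (\<lambda>t. ereal v)"
    by (rule Liminf_mono) (use bounds in eventually_elim, simp)
  moreover have "limsup (\<lambda>t. ereal v) \<le> limsup (\<lambda>t. ereal (hi t))"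
    by (rule Limsup_mono) (use bounds in eventually_elim, simp)
  moreover have "liminf (\<lambda>t. ereal (g t)) \<le> limsup (\<lambda>t. ereal (g t))"
    by (rule Liminf_le_Limsup) simp
  ultimately show ?thesis
    unfolding Let_def v_def[symmetric] g_def[symmetric] lo_def[symmetric] hi_def[symmetric]
    by (auto simp: algebra_simps Liminf_const Limsup_const intro: order_trans)
qed

theorem proposition1:
  fixes P :: "'w measure"
    and M :: "'r::finite \<Rightarrow> 'c::finite \<Rightarrow> real"
    and A :: "nat \<Rightarrow> 'w \<Rightarrow> 'r \<Rightarrow> 'c \<Rightarrow> real"
    and I :: "nat \<Rightarrow> 'w \<Rightarrow> 'r"
    and J :: "nat \<Rightarrow> 'w \<Rightarrow> 'c"
    and \<epsilon> c :: real
  assumes "prob_space P"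
    and M_range: "\<And>i j. 0 \<le> M i j \<and> M i j \<le> 1"
    and A_range: "\<And>t \<omega> i j. 0 \<le> A t \<omega> i j \<and> A t \<omega> i j \<le> 1"
    and "0 \<le> \<epsilon>" and "0 \<le> c"
    and error: "AE \<omega> in P. \<exists>t0. \<forall>t\<ge>t0. \<forall>i j. \<bar>A t \<omega> i j - M i j\<bar> < c * \<epsilon>"
    and hannan1: "AE \<omega> in P.
       limsup (\<lambda>t. ereal (regret1 (\<lambda>s. A s \<omega>) (\<lambda>s. I s \<omega>) (\<lambda>s. J s \<omega>) t)) \<le> ereal \<epsilon>"
    and hannan2: "AE \<omega> in P.
       limsup (\<lambda>t. ereal (regret2 (\<lambda>s. A s \<omega>) (\<lambda>s. I s \<omega>) (\<lambda>s. J s \<omega>) t)) \<le> ereal \<epsilon>"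
  shows "AE \<omega> in P.
    (let g = (\<lambda>t. ereal (avg_payoff (\<lambda>s. A s \<omega>) (\<lambda>s. I s \<omega>) (\<lambda>s. J s \<omega>) t));
         v = game_value M;
         lo = (\<lambda>t. ereal (util_br2 M (emp_freq (\<lambda>s. I s \<omega>) t)));
         hi = (\<lambda>t. ereal (util_br1 M (emp_freq (\<lambda>s. J s \<omega>) t)))
     in ereal (v - (c + 1) * \<epsilon>) \<le> liminf g \<and> liminf g \<le> limsup g
        \<and> limsup g \<le> ereal (v + (c + 1) * \<epsilon>)
        \<and> ereal (v - 2 * (c + 1) * \<epsilon>) \<le> liminf lo \<and> liminf lo \<le> limsup hi
        \<and> limsup hi \<le> ereal (v + 2 * (c + 1) * \<epsilon>))"
  using error hannan1 hannan2
proof eventually_elim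
  case (elim \<omega>)
  then obtain t0 where "\<forall>t\<ge>t0. \<forall>i j. \<bar>A t \<omega> i j - M i j\<bar> < c * \<epsilon>"
    by blast
  then have "\<bar>A t \<omega> i j - M i j\<bar> \<le> c * \<epsilon>" if "t0 \<le> t" for t i j
    using that by (simp add: less_imp_le)
  then show ?case
    by (intro hannan_consistent_play_bounds[OF M_range _ \<open>0 \<le> \<epsilon>\<close> \<open>0 \<le> c\<close> _ elim(2,3)] A_range)
qed

end
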